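(* Consider linear regression with label noise in the limit $N\to\infty$ with $D$ fixed. Then, for the stationary distribution of the parameter $\mathbf{w}$ with $\Sigma:=\mathbb{E}_{\mathbf{w}}[(\mathbf{w}-\mathbf{u})(\mathbf{w}-\mathbf{u})^{\mathrm T}]$, the averaged minibatch noise covariance is $$C:=\mathbb{E}_{\mathbf{w}}[C(\mathbf{w})]=\frac1S\big(A\Sigma A+\mathrm{Tr}[A\Sigma]\,A+\sigma^2A\big).$$
   Context: Data: $x_i\in\mathbb{R}^D$ i.i.d. $\mathcal N(0,A)$ with $A$ symmetric positive definite; labels $y_i=\mathbf{u}^{\mathrm T}x_i+\epsilon_i$ for a fixed $\mathbf{u}\in\mathbb{R}^D$, where the $\epsilon_i$ are i.i.d., independent of the $x_i$, with mean $0$ and variance $\sigma^2$. Per-sample loss $\ell_i(\mathbf{w})=\frac12(\mathbf{w}^{\mathrm T}x_i-y_i)^2$, $L(\mathbf{w})=\frac1N\sum_{i=1}^N\ell_i(\mathbf{w})$. For minibatch size $S$ the noise covariance is $C(\mathbf{w})=\frac{1}{SN}\sum_{i=1}^N\nabla\ell_i(\mathbf{w})\nabla\ell_i(\mathbf{w})^{\mathrm T}-\frac1S\nabla L(\mathbf{w})\nabla L(\mathbf{w})^{\mathrm T}$, and $C(\mathbf{w})$ is understood in the limit $N\to\infty$. The expectation $\mathbb{E}_{\mathbf{w}}$ is over the stationary distribution of the SGD parameter. *)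

theory Defs
  imports "HOL-Probability.Probability"
begin

definition outer :: "real^'n \<Rightarrow> real^'n \<Rightarrow> real^'n^'n" where
  "outer v w = (\<chi> i j. v $ i * w $ j)"

definition spd :: "real^'n^'n \<Rightarrow> bool" where
  "spd A \<longleftrightarrow> transpose A = A \<and> (\<forall>v. v \<noteq> 0 \<longrightarrow> v \<bullet> (A *v v) > 0)"

(* mu is the centred multivariate normal law N(0,A) on R^D:
   every linear functional t.x is N(0, t^T A t) *)
definition gaussian_vec :: "(real^'n) measure \<Rightarrow> real^'n^'n \<Rightarrow> bool" where
  "gaussian_vec \<mu> A \<longleftrightarrow> prob_space \<mu> \<and> sets \<mu> = sets borel \<and>
     (\<forall>t. t \<noteq> 0 \<longrightarrow>
        distributed \<mu> lborel (\<lambda>x. t \<bullet> x) (normal_density 0 (sqrt (t \<bullet> (A *v t)))))"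

(* per-sample gradient of l(w) = 1/2 (w^T x - y)^2 with y = u^T x + eps *)
definition grad_l :: "real^'n \<Rightarrow> real^'n \<Rightarrow> real^'n \<Rightarrow> real \<Rightarrow> real^'n" where
  "grad_l u w x eps = (w \<bullet> x - (u \<bullet> x + eps)) *\<^sub>R x"

(* N \<rightarrow> \<infinity> limit of the minibatch noise covariance
   C(w) = 1/(SN) sum_i g_i g_i^T - 1/S (grad L)(grad L)^T,
   i.e. the population version: 1/S (E[g g^T] - E[g] E[g]^T),
   where the sample (x, eps) is given by random variables X, Ep on M *)
definition noise_cov ::
  "'a measure \<Rightarrow> ('a \<Rightarrow> real^'n) \<Rightarrow> ('a \<Rightarrow> real) \<Rightarrow> real^'n \<Rightarrow> real \<Rightarrow> real^'n \<Rightarrow> real^'n^'n" where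
  "noise_cov M X Ep u S w =
     (1 / S) *\<^sub>R ((LINT \<omega>|M. outer (grad_l u w (X \<omega>) (Ep \<omega>)) (grad_l u w (X \<omega>) (Ep \<omega>)))
        - outer (LINT \<omega>|M. grad_l u w (X \<omega>) (Ep \<omega>)) (LINT \<omega>|M. grad_l u w (X \<omega>) (Ep \<omega>)))"

end

theory Submission imports Defs begin

(* Fix w and put v = w - u. The per-sample gradient is g = (v.x - eps) x, so by the independence
   of x and eps, E eps = 0 and E eps^2 = sigma^2, the moments of g reduce to Gaussian moments of x:
   E g = E[(v.x) x] = A v, and Isserlis' formula E[(v.x)^2 x x^T] = (v^T A v) A + 2 (A v)(A v)^T gives
   E[g g^T] = (v^T A v) A + 2 (A v)(A v)^T + sigma^2 A. Hence
   S C(w) = A v v^T A + Tr[A v v^T] A + sigma^2 A, an affine function of v v^T, and averaging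
   over the stationary law of w replaces v v^T by Sigma. *)

lemma bounded_linear_axis: "bounded_linear (axis i :: 'b::real_inner \<Rightarrow> 'b^'n)"
proof (rule bounded_linear_intro[where K = 1])
  show "axis i (x + y) = axis i x + axis i y" for x y :: 'b
    by (simp add: axis_def vec_eq_iff)
  show "axis i (r *\<^sub>R x) = r *\<^sub>R axis i x" for r and x :: 'b
    by (simp add: axis_def vec_eq_iff)
  show "norm (axis i x :: 'b^'n) \<le> norm x * 1" for x :: 'b
    by (simp add: norm_eq_sqrt_inner inner_axis_axis)
qed

lemma integrable_vec_iff:
  fixes f :: "'a \<Rightarrow> 'b::euclidean_space^'n"
  shows "integrable M f \<longleftrightarrow> (\<forall>i. integrable M (\<lambda>x. f x $ i))"
proof
  assume "integrable M f"
  then show "\<forall>i. integrable M (\<lambda>x. f x $ i)"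
    using integrable_bounded_linear[OF bounded_linear_vec_nth] by blast
next
  assume components: "\<forall>i. integrable M (\<lambda>x. f x $ i)"
  have "f = (\<lambda>x. \<Sum>i\<in>UNIV. axis i (f x $ i))"
    by (auto simp: vec_eq_iff axis_def if_distrib cong: if_cong)
  moreover have "integrable M (\<lambda>x. \<Sum>i\<in>UNIV. axis i (f x $ i))"
    using components by (auto intro!: integrable_sum integrable_bounded_linear[OF bounded_linear_axis])
  ultimately show "integrable M f"
    by simp
qed

lemma integral_vec_nth:
  fixes f :: "'a \<Rightarrow> 'b::euclidean_space^'n"
  assumes "integrable M f"
  shows "(LINT x|M. f x) $ i = (LINT x|M. f x $ i)"
  using integral_bounded_linear[OF bounded_linear_vec_nth assms, of i] by simp

lemma integral_matrix_nth:
  fixes f :: "'a \<Rightarrow> real^'n^'m"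
  assumes "integrable M f"
  shows "(LINT x|M. f x) $ i $ j = (LINT x|M. f x $ i $ j)"
  using assms by (simp add: integral_vec_nth integrable_vec_iff)

text \<open>\<open>indep_var\<close> requires both random variables to have the same codomain, so
  independence of X and Y is expressed through functions of them into a common space N.\<close>
lemma (in prob_space) indep_var_compose_of_distr_pair:
  assumes [measurable]: "X \<in> measurable M S" "Y \<in> measurable M T"
    and joint: "distr M (S \<Otimes>\<^sub>M T) (\<lambda>\<omega>. (X \<omega>, Y \<omega>)) = distr M S X \<Otimes>\<^sub>M distr M T Y"
    and [measurable]: "f \<in> measurable S N" "g \<in> measurable T N"
  shows "indep_var N (\<lambda>\<omega>. f (X \<omega>)) N (\<lambda>\<omega>. g (Y \<omega>))"
proof -
  have sigma_finite: "sigma_finite_measure (distr (distr M T Y) N g)"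
    by (intro prob_space_imp_sigma_finite prob_space.prob_space_distr prob_space_distr) auto
  have "distr M N (\<lambda>\<omega>. f (X \<omega>)) \<Otimes>\<^sub>M distr M N (\<lambda>\<omega>. g (Y \<omega>))
      = distr (distr M S X) N f \<Otimes>\<^sub>M distr (distr M T Y) N g"
    by (simp add: distr_distr comp_def)
  also have "\<dots> = distr (distr M S X \<Otimes>\<^sub>M distr M T Y) (N \<Otimes>\<^sub>M N) (\<lambda>(x, y). (f x, g y))"
    using sigma_finite by (rule pair_measure_distr[rotated 2]) auto
  also have "\<dots> = distr M (N \<Otimes>\<^sub>M N) (\<lambda>\<omega>. (f (X \<omega>), g (Y \<omega>)))"
    by (simp add: joint[symmetric] distr_distr comp_def)
  finally show ?thesis
    by (subst indep_var_distribution_eq) auto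
qed

lemma outer_nth [simp]: "outer v w $ i $ j = v $ i * w $ j"
  by (simp add: outer_def)

lemma matrix_outer_matrix: "A ** outer v w ** B = outer (A *v v) (transpose B *v w)"
  by (simp add: vec_eq_iff matrix_matrix_mult_def matrix_vector_mult_def transpose_def
      sum_distrib_left sum_distrib_right mult_ac)

lemma trace_matrix_outer: "trace (A ** outer v w) = w \<bullet> (A *v v)"
  by (simp add: trace_def matrix_matrix_mult_def matrix_vector_mult_def inner_vec_def
      sum_distrib_left mult_ac)

lemma norm_outer: "norm (outer v w) = norm v * norm w"
proof -
  have rows: "outer v w $ i = v $ i *\<^sub>R w" for i
    by (simp add: vec_eq_iff)
  have "norm (outer v w) = L2_set (\<lambda>i. \<bar>v $ i\<bar> * norm w) UNIV"
    unfolding norm_vec_def[of "outer v w"] rows by simp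
  also have "\<dots> = norm v * norm w"
    by (simp add: L2_set_left_distrib norm_vec_def[of v])
  finally show ?thesis .
qed

lemma matrix_nth_inner_axis: "A $ i $ j = axis i 1 \<bullet> (A *v axis j 1)"
  by (simp add: matrix_vector_mult_basis inner_axis' column_def)

lemma spd_inner_commute:
  assumes "spd A"
  shows "a \<bullet> (A *v b) = b \<bullet> (A *v a)"
proof -
  have "transpose A = A" using assms by (simp add: spd_def)
  then have "a v* A = A *v a" by (metis transpose_matrix_vector)
  then show ?thesis by (metis dot_lmul_matrix inner_commute)
qed

lemma matrix_vector_nth_inner_axis:
  assumes "spd A"
  shows "(A *v v) $ i = v \<bullet> (A *v axis i 1)"
  using spd_inner_commute[OF assms, of "axis i 1" v] by (simp add: inner_axis')

lemma bounded_linear_sandwich_trace: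
  fixes A B C D :: "real^'n^'n"
  shows "bounded_linear (\<lambda>\<Sigma>. c *\<^sub>R (A ** \<Sigma> ** B + trace (C ** \<Sigma>) *\<^sub>R D))"
proof -
  have "linear (\<lambda>\<Sigma>. c *\<^sub>R (A ** \<Sigma> ** B + trace (C ** \<Sigma>) *\<^sub>R D))"
    by (rule linearI)
      (simp_all add: vec_eq_iff matrix_matrix_mult_def trace_def sum.distrib sum_distrib_left
        algebra_simps)
  then show ?thesis
    by (simp add: linear_conv_bounded_linear)
qed

lemma integrable_outer_diff:
  fixes W :: "(real^'n) measure"
  assumes "finite_measure W" and sets_W: "sets W = sets borel"
    and "integrable W (\<lambda>w. (norm w)\<^sup>2)"
  shows "integrable W (\<lambda>w. outer (w - u) (w - u))"
proof (rule Bochner_Integration.integrable_bound)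
  show "integrable W (\<lambda>w. 2 * (norm w)\<^sup>2 + 2 * (norm u)\<^sup>2)"
    using assms by (simp add: finite_measure.integrable_const)
  show "(\<lambda>w. outer (w - u) (w - u)) \<in> borel_measurable W"
    unfolding measurable_cong_sets[OF sets_W refl] outer_def
    by (intro borel_measurable_continuous_onI continuous_on_vec_lambda continuous_intros)
  show "AE w in W. norm (outer (w - u) (w - u)) \<le> norm (2 * (norm w)\<^sup>2 + 2 * (norm u)\<^sup>2)"
  proof (rule AE_I2)
    fix w
    have "(norm (w - u))\<^sup>2 \<le> (norm w + norm u)\<^sup>2"
      by (simp add: power_mono norm_triangle_ineq4)
    also have "\<dots> \<le> 2 * (norm w)\<^sup>2 + 2 * (norm u)\<^sup>2"
      using sum_squares_bound[of "norm w" "norm u"] by (simp add: power2_sum)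
    finally show "norm (outer (w - u) (w - u)) \<le> norm (2 * (norm w)\<^sup>2 + 2 * (norm u)\<^sup>2)"
      by (simp add: norm_outer power2_eq_square)
  qed
qed

locale gaussian_random_vector = prob_space +
  fixes X :: "'a \<Rightarrow> real^'n" and A :: "real^'n^'n"
  assumes X_measurable [measurable]: "X \<in> borel_measurable M"
    and gaussian_X: "gaussian_vec (distr M borel X) A"
    and spd_A: "spd A"
begin

lemma even_moment:
  "integrable M (\<lambda>\<omega>. (t \<bullet> X \<omega>) ^ (2 * k)) \<and>
   (LINT \<omega>|M. (t \<bullet> X \<omega>) ^ (2 * k)) = fact (2 * k) / (2 ^ k * fact k) * (t \<bullet> (A *v t)) ^ k"
proof (cases "t = 0")
  case True
  then show ?thesis by (cases k) (simp_all add: prob_space)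
next
  case False
  define s where "s = sqrt (t \<bullet> (A *v t))"
  have "t \<bullet> (A *v t) > 0"
    using spd_A False by (simp add: spd_def)
  then have s_pos: "s > 0" and s_square: "s\<^sup>2 = t \<bullet> (A *v t)"
    by (simp_all add: s_def)
  have law: "distributed (distr M borel X) lborel (\<lambda>x. t \<bullet> x) (\<lambda>y. ennreal (normal_density 0 s y))"
    using gaussian_X False by (simp add: gaussian_vec_def s_def)
  have normal: "has_bochner_integral lborel (\<lambda>y. normal_density 0 s y * y ^ (2 * k))
      (fact (2 * k) / ((2 / s\<^sup>2) ^ k * fact k))"
    using normal_moment_even[OF s_pos, of 0 k] by simp
  have "integrable (distr M borel X) (\<lambda>x. (t \<bullet> x) ^ (2 * k))"
    using distributed_integrable[OF law, of "\<lambda>y. y ^ (2 * k)"] normal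
    by (auto intro: integrable.intros)
  then have "integrable M (\<lambda>\<omega>. (t \<bullet> X \<omega>) ^ (2 * k))"
    by (simp add: integrable_distr_eq)
  have "(LINT x|distr M borel X. (t \<bullet> x) ^ (2 * k)) = fact (2 * k) / ((2 / s\<^sup>2) ^ k * fact k)"
    using distributed_integral[OF law, of "\<lambda>y. y ^ (2 * k)"] normal
    by (auto simp: has_bochner_integral_integral_eq)
  also have "\<dots> = fact (2 * k) / (2 ^ k * fact k) * (t \<bullet> (A *v t)) ^ k"
    using s_pos by (simp add: s_square [symmetric] power_divide)
  finally show ?thesis
    using \<open>integrable M (\<lambda>\<omega>. (t \<bullet> X \<omega>) ^ (2 * k))\<close> by (simp add: integral_distr)
qed

lemma
  shows integrable_second_moment: "integrable M (\<lambda>\<omega>. (t \<bullet> X \<omega>)\<^sup>2)"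
    and integral_second_moment: "(LINT \<omega>|M. (t \<bullet> X \<omega>)\<^sup>2) = t \<bullet> (A *v t)"
  using even_moment[of t 1] by simp_all

lemma
  shows integrable_fourth_moment: "integrable M (\<lambda>\<omega>. (t \<bullet> X \<omega>) ^ 4)"
    and integral_fourth_moment: "(LINT \<omega>|M. (t \<bullet> X \<omega>) ^ 4) = 3 * (t \<bullet> (A *v t))\<^sup>2"
  using even_moment[of t 2] by (simp_all add: fact_numeral)

lemma integrable_inner: "integrable M (\<lambda>\<omega>. t \<bullet> X \<omega>)"
  by (rule square_integrable_imp_integrable) (simp_all add: integrable_second_moment)

lemma
  shows integrable_covariance: "integrable M (\<lambda>\<omega>. (a \<bullet> X \<omega>) * (b \<bullet> X \<omega>))"
    and integral_covariance: "(LINT \<omega>|M. (a \<bullet> X \<omega>) * (b \<bullet> X \<omega>)) = a \<bullet> (A *v b)"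
proof -
  have polarization: "(\<lambda>\<omega>. (a \<bullet> X \<omega>) * (b \<bullet> X \<omega>)) =
      (\<lambda>\<omega>. (((a + b) \<bullet> X \<omega>)\<^sup>2 - ((a - b) \<bullet> X \<omega>)\<^sup>2) / 4)"
    by (auto simp: inner_add_left inner_diff_left power2_eq_square field_simps)
  show "integrable M (\<lambda>\<omega>. (a \<bullet> X \<omega>) * (b \<bullet> X \<omega>))"
    unfolding polarization by (simp add: integrable_second_moment)
  have "b \<bullet> (A *v a) = a \<bullet> (A *v b)"
    using spd_A by (rule spd_inner_commute)
  then show "(LINT \<omega>|M. (a \<bullet> X \<omega>) * (b \<bullet> X \<omega>)) = a \<bullet> (A *v b)"
    unfolding polarization
    by (simp add: integrable_second_moment integral_second_moment)
      (simp add: inner_add_left inner_diff_left inner_add_right inner_diff_right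
        matrix_vector_right_distrib matrix_vector_mult_diff_distrib)
qed

text \<open>Isserlis' formula, obtained from the fourth moments by polarization.\<close>
lemma
  shows integrable_mixed_fourth_moment:
      "integrable M (\<lambda>\<omega>. (v \<bullet> X \<omega>)\<^sup>2 * (a \<bullet> X \<omega>) * (b \<bullet> X \<omega>))"
    and integral_mixed_fourth_moment:
      "(LINT \<omega>|M. (v \<bullet> X \<omega>)\<^sup>2 * (a \<bullet> X \<omega>) * (b \<bullet> X \<omega>)) =
         (v \<bullet> (A *v v)) * (a \<bullet> (A *v b)) + 2 * (v \<bullet> (A *v a)) * (v \<bullet> (A *v b))"
proof -
  have polarization: "(p::real)\<^sup>2 * q * r = ((p + q + r) ^ 4 + (p - q - r) ^ 4 - (p + q - r) ^ 4
      - (p - q + r) ^ 4 - 2 * (q + r) ^ 4 + 2 * (q - r) ^ 4) / 48" for p q r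
    by (simp add: field_simps power_def numeral_eq_Suc)
  have eq: "(\<lambda>\<omega>. (v \<bullet> X \<omega>)\<^sup>2 * (a \<bullet> X \<omega>) * (b \<bullet> X \<omega>)) = (\<lambda>\<omega>.
      (((v + a + b) \<bullet> X \<omega>) ^ 4 + ((v - a - b) \<bullet> X \<omega>) ^ 4 - ((v + a - b) \<bullet> X \<omega>) ^ 4
       - ((v - a + b) \<bullet> X \<omega>) ^ 4 - 2 * ((a + b) \<bullet> X \<omega>) ^ 4 + 2 * ((a - b) \<bullet> X \<omega>) ^ 4) / 48)"
    by (subst polarization) (simp add: inner_add_left inner_diff_left)
  show "integrable M (\<lambda>\<omega>. (v \<bullet> X \<omega>)\<^sup>2 * (a \<bullet> X \<omega>) * (b \<bullet> X \<omega>))"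
    unfolding eq by (simp add: integrable_fourth_moment)
  have "a \<bullet> (A *v v) = v \<bullet> (A *v a)" "b \<bullet> (A *v v) = v \<bullet> (A *v b)" "b \<bullet> (A *v a) = a \<bullet> (A *v b)"
    using spd_A by (auto intro: spd_inner_commute)
  then show "(LINT \<omega>|M. (v \<bullet> X \<omega>)\<^sup>2 * (a \<bullet> X \<omega>) * (b \<bullet> X \<omega>)) =
      (v \<bullet> (A *v v)) * (a \<bullet> (A *v b)) + 2 * (v \<bullet> (A *v a)) * (v \<bullet> (A *v b))"
    unfolding eq
    by (simp add: integrable_fourth_moment integral_fourth_moment)
      (simp add: inner_add_left inner_diff_left inner_add_right inner_diff_right
        matrix_vector_right_distrib matrix_vector_mult_diff_distrib field_simps power2_eq_square)
qed

lemma integrable_third_moment: "integrable M (\<lambda>\<omega>. (v \<bullet> X \<omega>) * (a \<bullet> X \<omega>) * (b \<bullet> X \<omega>))"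
proof (rule Bochner_Integration.integrable_bound)
  show "integrable M (\<lambda>\<omega>. ((v \<bullet> X \<omega>)\<^sup>2 * (a \<bullet> X \<omega>) * (a \<bullet> X \<omega>) + (b \<bullet> X \<omega>)\<^sup>2) / 2)"
    by (simp add: integrable_mixed_fourth_moment integrable_second_moment)
  show "AE \<omega> in M. norm ((v \<bullet> X \<omega>) * (a \<bullet> X \<omega>) * (b \<bullet> X \<omega>))
      \<le> norm (((v \<bullet> X \<omega>)\<^sup>2 * (a \<bullet> X \<omega>) * (a \<bullet> X \<omega>) + (b \<bullet> X \<omega>)\<^sup>2) / 2)"
  proof (rule AE_I2)
    fix \<omega>
    define p q r where "p = v \<bullet> X \<omega>" and "q = a \<bullet> X \<omega>" and "r = b \<bullet> X \<omega>"
    have "\<bar>p * q * r\<bar> \<le> ((p * q)\<^sup>2 + r\<^sup>2) / 2"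
      using sum_squares_bound[of "\<bar>p * q\<bar>" "\<bar>r\<bar>"] by (simp add: abs_mult power_mult_distrib)
    then show "norm (p * q * r) \<le> norm ((p\<^sup>2 * q * q + r\<^sup>2) / 2)"
      by (simp add: power2_eq_square mult_ac)
  qed
qed measurable

end

lemma grad_l_nth: "grad_l u w x e $ i = ((w - u) \<bullet> x - e) * (axis i 1 \<bullet> x)"
  by (simp add: grad_l_def inner_diff_left inner_axis')

locale linear_regression_label_noise = gaussian_random_vector M X A
  for M :: "'a measure" and X :: "'a \<Rightarrow> real^'n" and A +
  fixes \<epsilon> :: "'a \<Rightarrow> real" and \<sigma> :: real
  assumes noise_measurable [measurable]: "\<epsilon> \<in> borel_measurable M"
    and noise_independent:
      "distr M (borel \<Otimes>\<^sub>M borel) (\<lambda>\<omega>. (X \<omega>, \<epsilon> \<omega>)) = distr M borel X \<Otimes>\<^sub>M distr M borel \<epsilon>"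
    and integrable_noise_square: "integrable M (\<lambda>\<omega>. (\<epsilon> \<omega>)\<^sup>2)"
    and noise_mean: "expectation \<epsilon> = 0"
    and noise_variance: "variance \<epsilon> = \<sigma>\<^sup>2"
begin

lemma integrable_noise: "integrable M \<epsilon>"
  using integrable_noise_square by (rule square_integrable_imp_integrable[rotated]) simp

lemma integral_noise_square: "(LINT \<omega>|M. (\<epsilon> \<omega>)\<^sup>2) = \<sigma>\<^sup>2"
  using noise_variance by (simp add: noise_mean)

lemma
  fixes k :: "real \<Rightarrow> real"
  assumes [measurable]: "h \<in> borel_measurable borel" "k \<in> borel_measurable borel"
    and "integrable M (\<lambda>\<omega>. h (X \<omega>))" "integrable M (\<lambda>\<omega>. k (\<epsilon> \<omega>))"
  shows integrable_indep_mult: "integrable M (\<lambda>\<omega>. h (X \<omega>) * k (\<epsilon> \<omega>))"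
    and integral_indep_mult:
      "(LINT \<omega>|M. h (X \<omega>) * k (\<epsilon> \<omega>)) = (LINT \<omega>|M. h (X \<omega>)) * (LINT \<omega>|M. k (\<epsilon> \<omega>))"
proof -
  have indep: "indep_var borel (\<lambda>\<omega>. h (X \<omega>)) borel (\<lambda>\<omega>. k (\<epsilon> \<omega>))"
    using indep_var_compose_of_distr_pair[where f = h and g = k, OF X_measurable noise_measurable
        noise_independent assms(1,2)] .
  from indep assms(3,4) show "integrable M (\<lambda>\<omega>. h (X \<omega>) * k (\<epsilon> \<omega>))"
    by (rule indep_var_integrable)
  from indep assms(3,4)
  show "(LINT \<omega>|M. h (X \<omega>) * k (\<epsilon> \<omega>)) = (LINT \<omega>|M. h (X \<omega>)) * (LINT \<omega>|M. k (\<epsilon> \<omega>))"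
    by (rule indep_var_lebesgue_integral)
qed

lemma
  shows integrable_grad: "integrable M (\<lambda>\<omega>. grad_l u w (X \<omega>) (\<epsilon> \<omega>))"
    and integral_grad: "(LINT \<omega>|M. grad_l u w (X \<omega>) (\<epsilon> \<omega>)) = A *v (w - u)"
proof -
  define v where "v = w - u"
  have component: "grad_l u w (X \<omega>) (\<epsilon> \<omega>) $ i
      = (v \<bullet> X \<omega>) * (axis i 1 \<bullet> X \<omega>) - (axis i 1 \<bullet> X \<omega>) * \<epsilon> \<omega>" for \<omega> i
    by (simp add: grad_l_nth v_def algebra_simps)
  have noise_term: "integrable M (\<lambda>\<omega>. (axis i 1 \<bullet> X \<omega>) * \<epsilon> \<omega>)"
    "(LINT \<omega>|M. (axis i 1 \<bullet> X \<omega>) * \<epsilon> \<omega>) = 0" for i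
  proof -
    have "(\<lambda>x::real^'n. axis i 1 \<bullet> x) \<in> borel_measurable borel" "(\<lambda>e::real. e) \<in> borel_measurable borel"
      by measurable
    from integrable_indep_mult[OF this integrable_inner integrable_noise]
      integral_indep_mult[OF this integrable_inner integrable_noise]
    show "integrable M (\<lambda>\<omega>. (axis i 1 \<bullet> X \<omega>) * \<epsilon> \<omega>)"
      "(LINT \<omega>|M. (axis i 1 \<bullet> X \<omega>) * \<epsilon> \<omega>) = 0"
      by (simp_all add: noise_mean)
  qed
  have "integrable M (\<lambda>\<omega>. grad_l u w (X \<omega>) (\<epsilon> \<omega>) $ i)" for i
    unfolding component using noise_term by (simp add: integrable_covariance)
  then show integrable: "integrable M (\<lambda>\<omega>. grad_l u w (X \<omega>) (\<epsilon> \<omega>))"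
    by (simp add: integrable_vec_iff)
  have "(LINT \<omega>|M. grad_l u w (X \<omega>) (\<epsilon> \<omega>) $ i) = (A *v v) $ i" for i
    unfolding component using noise_term
    by (simp add: integrable_covariance integral_covariance matrix_vector_nth_inner_axis[OF spd_A])
  then show "(LINT \<omega>|M. grad_l u w (X \<omega>) (\<epsilon> \<omega>)) = A *v (w - u)"
    by (simp add: vec_eq_iff integral_vec_nth[OF integrable] v_def)
qed

lemma
  shows integrable_grad_outer:
      "integrable M (\<lambda>\<omega>. outer (grad_l u w (X \<omega>) (\<epsilon> \<omega>)) (grad_l u w (X \<omega>) (\<epsilon> \<omega>)))"
    and integral_grad_outer:
      "(LINT \<omega>|M. outer (grad_l u w (X \<omega>) (\<epsilon> \<omega>)) (grad_l u w (X \<omega>) (\<epsilon> \<omega>)))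
         = ((w - u) \<bullet> (A *v (w - u))) *\<^sub>R A + 2 *\<^sub>R outer (A *v (w - u)) (A *v (w - u)) + \<sigma>\<^sup>2 *\<^sub>R A"
proof -
  define v where "v = w - u"
  define g where "g \<omega> = grad_l u w (X \<omega>) (\<epsilon> \<omega>)" for \<omega>
  have entry: "outer (g \<omega>) (g \<omega>) $ i $ j
      = (v \<bullet> X \<omega>)\<^sup>2 * (axis i 1 \<bullet> X \<omega>) * (axis j 1 \<bullet> X \<omega>)
        - 2 * ((v \<bullet> X \<omega>) * (axis i 1 \<bullet> X \<omega>) * (axis j 1 \<bullet> X \<omega>) * \<epsilon> \<omega>)
        + (axis i 1 \<bullet> X \<omega>) * (axis j 1 \<bullet> X \<omega>) * (\<epsilon> \<omega>)\<^sup>2" for \<omega> i j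
    by (simp add: g_def grad_l_nth v_def power2_eq_square algebra_simps)
  have odd_term: "integrable M (\<lambda>\<omega>. (v \<bullet> X \<omega>) * (axis i 1 \<bullet> X \<omega>) * (axis j 1 \<bullet> X \<omega>) * \<epsilon> \<omega>)"
    "(LINT \<omega>|M. (v \<bullet> X \<omega>) * (axis i 1 \<bullet> X \<omega>) * (axis j 1 \<bullet> X \<omega>) * \<epsilon> \<omega>) = 0" for i j
  proof -
    have "(\<lambda>x::real^'n. (v \<bullet> x) * (axis i 1 \<bullet> x) * (axis j 1 \<bullet> x)) \<in> borel_measurable borel"
      "(\<lambda>e::real. e) \<in> borel_measurable borel"
      by measurable
    from integrable_indep_mult[OF this integrable_third_moment integrable_noise]
      integral_indep_mult[OF this integrable_third_moment integrable_noise]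
    show "integrable M (\<lambda>\<omega>. (v \<bullet> X \<omega>) * (axis i 1 \<bullet> X \<omega>) * (axis j 1 \<bullet> X \<omega>) * \<epsilon> \<omega>)"
      "(LINT \<omega>|M. (v \<bullet> X \<omega>) * (axis i 1 \<bullet> X \<omega>) * (axis j 1 \<bullet> X \<omega>) * \<epsilon> \<omega>) = 0"
      by (simp_all add: noise_mean)
  qed
  have noise_term: "integrable M (\<lambda>\<omega>. (axis i 1 \<bullet> X \<omega>) * (axis j 1 \<bullet> X \<omega>) * (\<epsilon> \<omega>)\<^sup>2)"
    "(LINT \<omega>|M. (axis i 1 \<bullet> X \<omega>) * (axis j 1 \<bullet> X \<omega>) * (\<epsilon> \<omega>)\<^sup>2) = A $ i $ j * \<sigma>\<^sup>2" for i j
  proof -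
    have "(\<lambda>x::real^'n. (axis i 1 \<bullet> x) * (axis j 1 \<bullet> x)) \<in> borel_measurable borel"
      "(\<lambda>e::real. e\<^sup>2) \<in> borel_measurable borel"
      by measurable
    from integrable_indep_mult[OF this integrable_covariance integrable_noise_square]
      integral_indep_mult[OF this integrable_covariance integrable_noise_square]
    show "integrable M (\<lambda>\<omega>. (axis i 1 \<bullet> X \<omega>) * (axis j 1 \<bullet> X \<omega>) * (\<epsilon> \<omega>)\<^sup>2)"
      "(LINT \<omega>|M. (axis i 1 \<bullet> X \<omega>) * (axis j 1 \<bullet> X \<omega>) * (\<epsilon> \<omega>)\<^sup>2) = A $ i $ j * \<sigma>\<^sup>2"
      by (simp_all add: integral_covariance integral_noise_square matrix_nth_inner_axis)
  qed
  have "integrable M (\<lambda>\<omega>. outer (g \<omega>) (g \<omega>) $ i $ j)" for i j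
    unfolding entry using odd_term noise_term by (simp add: integrable_mixed_fourth_moment)
  then show integrable: "integrable M (\<lambda>\<omega>. outer (g \<omega>) (g \<omega>))"
    by (simp add: integrable_vec_iff)
  have "(LINT \<omega>|M. outer (g \<omega>) (g \<omega>) $ i $ j)
      = (v \<bullet> (A *v v)) * A $ i $ j + 2 * ((A *v v) $ i * (A *v v) $ j) + \<sigma>\<^sup>2 * A $ i $ j" for i j
    unfolding entry using odd_term noise_term
    by (simp add: integrable_mixed_fourth_moment integral_mixed_fourth_moment
        matrix_nth_inner_axis matrix_vector_nth_inner_axis[OF spd_A])
  then show "(LINT \<omega>|M. outer (g \<omega>) (g \<omega>))
      = ((w - u) \<bullet> (A *v (w - u))) *\<^sub>R A + 2 *\<^sub>R outer (A *v (w - u)) (A *v (w - u)) + \<sigma>\<^sup>2 *\<^sub>R A"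
    by (simp add: vec_eq_iff integral_matrix_nth[OF integrable] v_def)
qed

lemma noise_cov_eq:
  "noise_cov M X \<epsilon> u s w = (1 / s) *\<^sub>R (A ** outer (w - u) (w - u) ** A
     + trace (A ** outer (w - u) (w - u)) *\<^sub>R A + \<sigma>\<^sup>2 *\<^sub>R A)"
proof -
  have "transpose A = A"
    using spd_A by (simp add: spd_def)
  then have "A ** outer (w - u) (w - u) ** A = outer (A *v (w - u)) (A *v (w - u))"
    by (simp add: matrix_outer_matrix)
  then show ?thesis
    by (simp add: noise_cov_def integral_grad integral_grad_outer trace_matrix_outer algebra_simps scaleR_2)
qed

end

theorem lemma1:
  fixes M :: "'a measure"
    and X :: "'a \<Rightarrow> real^'n" and Ep :: "'a \<Rightarrow> real"
    and A :: "real^'n^'n" and u :: "real^'n" and \<sigma> :: real and S :: nat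
    and W :: "(real^'n) measure"
  assumes "prob_space M"
    and "spd A"
    and "X \<in> borel_measurable M"
    and "Ep \<in> borel_measurable M"
    and "gaussian_vec (distr M borel X) A"
    and "distr M (borel \<Otimes>\<^sub>M borel) (\<lambda>\<omega>. (X \<omega>, Ep \<omega>)) = distr M borel X \<Otimes>\<^sub>M distr M borel Ep"
    and "integrable M (\<lambda>\<omega>. (Ep \<omega>)\<^sup>2)"
    and "prob_space.expectation M Ep = 0"
    and "prob_space.variance M Ep = \<sigma>\<^sup>2"
    and "S > 0"
    and "prob_space W" and "sets W = sets borel"
    and "integrable W (\<lambda>w. (norm w)\<^sup>2)"
  shows "(LINT w|W. noise_cov M X Ep u (real S) w)
       = (1 / real S) *\<^sub>R
           (A ** (LINT w|W. outer (w - u) (w - u)) ** A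
            + trace (A ** (LINT w|W. outer (w - u) (w - u))) *\<^sub>R A
            + \<sigma>\<^sup>2 *\<^sub>R A)"
proof -
  interpret linear_regression_label_noise M X A Ep \<sigma>
    using assms(1-9)
    by (intro linear_regression_label_noise.intro linear_regression_label_noise_axioms.intro
        gaussian_random_vector.intro gaussian_random_vector_axioms.intro)
  interpret W: prob_space W by fact
  define L where "L \<Sigma> = (1 / real S) *\<^sub>R (A ** \<Sigma> ** A + trace (A ** \<Sigma>) *\<^sub>R A)" for \<Sigma>
  have L: "bounded_linear L"
    unfolding L_def by (rule bounded_linear_sandwich_trace)
  have \<Sigma>: "integrable W (\<lambda>w. outer (w - u) (w - u))"
    using W.finite_measure_axioms assms(12,13) by (rule integrable_outer_diff)
  have "noise_cov M X Ep u (real S) w = L (outer (w - u) (w - u)) + (1 / real S) *\<^sub>R \<sigma>\<^sup>2 *\<^sub>R A" for w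
    by (simp add: noise_cov_eq L_def scaleR_add_right)
  then have "(LINT w|W. noise_cov M X Ep u (real S) w)
      = L (LINT w|W. outer (w - u) (w - u)) + (1 / real S) *\<^sub>R \<sigma>\<^sup>2 *\<^sub>R A"
    by (simp add: integrable_bounded_linear[OF L \<Sigma>] integral_bounded_linear[OF L \<Sigma>] W.prob_space)
  then show ?thesis
    by (simp add: L_def scaleR_add_right)
qed

end
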